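(* Consider the fifth-order WENO reconstruction of the numerical flux $\hat f_{i\pm\frac12}=\sum_{m=0}^{2}\omega_{m,i\pm\frac12}\hat f^m_{i\pm\frac12}$ on a uniform grid $x_i=x_0+i\Delta x$, for a smooth function $f$. Use the WENO-JS weights with $\epsilon=0$, $$\omega_{m}=\frac{\alpha_m}{\sum_{l=0}^2\alpha_l},\qquad \alpha_m=\frac{d_m}{(\beta^{DS}_{m})^2},\qquad (d_0,d_1,d_2)=\Bigl(\tfrac1{10},\tfrac6{10},\tfrac3{10}\Bigr),$$ where $\beta^{DS}_{m,i\pm\frac12}=\beta_{m,i\pm\frac12}(\delta_{m,i}+C)$. Assume that the Jiang–Shu smoothness indicators satisfy $\beta_{m,i\pm\frac12}=D(1+O(\Delta x^2))$ with $D$ a nonzero constant independent of $m$, that the multipliers satisfy $\delta_{1,i}=\Phi(\bar x_i)$, $\delta_{0,i}=\Phi(\bar x_i)+O(\Delta x)$, $\delta_{2,i}=\Phi(\bar x_i)+O(\Delta x)$ for some function $\Phi$ of the stencil $\bar x_i=(x_{i-k},\dots,x_{i+k})$, and that $C$ is chosen so that $P(\bar x_i):=\Phi(\bar x_i)+C>\kappa>0$ for a fixed $\kappa$ (with $P=O(1)$). Then $$\omega^{DS}_{m,i\pm\frac12}=d_m+O(\Delta x),\qquad m=0,1,2.$$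
   Context: Fifth-order WENO: on the stencil $\{x_{i-2},\dots,x_{i+2}\}$, with $f_j=f(u(x_j))$, the candidate fluxes are $\hat f^0_{i+\frac12}=\frac{2f_{i-2}-7f_{i-1}+11f_i}{6}$, $\hat f^1_{i+\frac12}=\frac{-f_{i-1}+5f_i+2f_{i+1}}{6}$, $\hat f^2_{i+\frac12}=\frac{2f_i+5f_{i+1}-f_{i+2}}{6}$ (the $i-\frac12$ versions by shifting all indices by $-1$). The Jiang–Shu smoothness indicators for $\hat f_{i+\frac12}$ are $\beta_0=\frac{13}{12}(f_{i-2}-2f_{i-1}+f_i)^2+\frac14(f_{i-2}-4f_{i-1}+3f_i)^2$, $\beta_1=\frac{13}{12}(f_{i-1}-2f_i+f_{i+1})^2+\frac14(-f_{i-1}+f_{i+1})^2$, $\beta_2=\frac{13}{12}(f_i-2f_{i+1}+f_{i+2})^2+\frac14(3f_i-4f_{i+1}+f_{i+2})^2$; those for $\hat f_{i-\frac12}$ by index shift $-1$. The same multiplier $\delta_{m,i}$ (depending only on the global stencil position $i$) is used for both $\beta_{m,i+\frac12}$ and $\beta_{m,i-\frac12}$; in the paper the $\delta_{m,i}$ are outputs of a convolutional neural network with differentiable activations and receptive field of size $2k+1$, with $\delta_{0,i+1}=\delta_{1,i}=\delta_{2,i-1}$. *)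

theory Defs
  imports "HOL-Analysis.Analysis"
begin

definition grid :: "real \<Rightarrow> real \<Rightarrow> int \<Rightarrow> real" where
  "grid x0 dx j = x0 + of_int j * dx"

definition fval :: "(real \<Rightarrow> real) \<Rightarrow> real \<Rightarrow> real \<Rightarrow> int \<Rightarrow> real" where
  "fval fx x0 dx j = fx (grid x0 dx j)"

text \<open>Jiang--Shu smoothness indicators beta_m for the flux at i+1/2
  (those for i-1/2 are obtained with index i-1).\<close>
definition betaJS :: "(real \<Rightarrow> real) \<Rightarrow> real \<Rightarrow> real \<Rightarrow> int \<Rightarrow> nat \<Rightarrow> real" where
  "betaJS fx x0 dx i m =
     (let f = fval fx x0 dx in
      if m = 0 then 13/12 * (f (i-2) - 2 * f (i-1) + f i)^2 + 1/4 * (f (i-2) - 4 * f (i-1) + 3 * f i)^2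
      else if m = 1 then 13/12 * (f (i-1) - 2 * f i + f (i+1))^2 + 1/4 * (- f (i-1) + f (i+1))^2
      else 13/12 * (f i - 2 * f (i+1) + f (i+2))^2 + 1/4 * (3 * f i - 4 * f (i+1) + f (i+2))^2)"

definition stencil :: "real \<Rightarrow> real \<Rightarrow> nat \<Rightarrow> int \<Rightarrow> real list" where
  "stencil x0 dx k i = map (grid x0 dx) [i - int k .. i + int k]"

definition dw :: "nat \<Rightarrow> real" where
  "dw m = (if m = 0 then 1/10 else if m = 1 then 6/10 else 3/10)"

definition betaDS :: "(nat \<Rightarrow> real) \<Rightarrow> (nat \<Rightarrow> real) \<Rightarrow> real \<Rightarrow> nat \<Rightarrow> real" where
  "betaDS beta delta C m = beta m * (delta m + C)"

definition alphaDS :: "(nat \<Rightarrow> real) \<Rightarrow> (nat \<Rightarrow> real) \<Rightarrow> real \<Rightarrow> nat \<Rightarrow> real" where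
  "alphaDS beta delta C m = dw m / (betaDS beta delta C m)^2"

definition omegaDS :: "(nat \<Rightarrow> real) \<Rightarrow> (nat \<Rightarrow> real) \<Rightarrow> real \<Rightarrow> nat \<Rightarrow> real" where
  "omegaDS beta delta C m = alphaDS beta delta C m / (\<Sum>l\<in>{0..2}. alphaDS beta delta C l)"

end

theory Submission
  imports Defs
begin

text \<open>Dividing every \<open>\<beta>\<^sup>D\<^sup>S\<^sub>m\<close> by the common scale \<open>D P\<close> does not change the weights.
  After this rescaling, \<open>\<beta>\<^sub>m = D (1 + O(\<Delta>x\<^sup>2))\<close> and \<open>\<delta>\<^sub>m + C = P + O(\<Delta>x)\<close> with \<open>P > \<kappa>\<close>
  make each rescaled indicator \<open>1 + O(\<Delta>x)\<close>, hence each factor \<open>(D P / \<beta>\<^sup>D\<^sup>S\<^sub>m)\<^sup>2\<close> is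
  \<open>1 + O(\<Delta>x)\<close>, and normalising \<open>d\<^sub>m s\<^sub>m\<close> with all \<open>s\<^sub>m = 1 + O(\<Delta>x)\<close> moves \<open>d\<^sub>m\<close> only by
  \<open>O(\<Delta>x)\<close>.\<close>

lemma relative_error_mult:
  fixes b p D P :: real
  assumes "D \<noteq> 0" "0 < P" "\<bar>b - D\<bar> \<le> e * \<bar>D\<bar>" "\<bar>p - P\<bar> \<le> \<eta>"
  shows "\<bar>b * p / (D * P) - 1\<bar> \<le> (\<eta> + e * \<bar>p\<bar>) / P"
proof -
  define r where "r = (b - D) / D"
  have r: "\<bar>r\<bar> \<le> e"
    using assms(1,3) unfolding r_def by (simp add: abs_divide divide_le_eq)
  have "b * p / (D * P) - 1 = ((p - P) + r * p) / P"
    using assms(1,2) unfolding r_def by (simp add: field_simps)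
  also have "\<bar>\<dots>\<bar> \<le> (\<bar>p - P\<bar> + \<bar>r\<bar> * \<bar>p\<bar>) / P"
    using assms(2) abs_triangle_ineq[of "p - P" "r * p"]
    by (simp add: abs_mult divide_right_mono)
  also have "\<dots> \<le> (\<eta> + e * \<bar>p\<bar>) / P"
    using assms(2,4) r by (intro divide_right_mono add_mono mult_right_mono) auto
  finally show ?thesis .
qed

lemma inverse_square_near_one:
  fixes q t :: real
  assumes "\<bar>q - 1\<bar> \<le> t" "t \<le> 1/2"
  shows "\<bar>1 / q\<^sup>2 - 1\<bar> \<le> 10 * t"
proof -
  have q: "1/2 \<le> q" "q \<le> 3/2" using assms by auto
  have "1/4 \<le> q\<^sup>2"
    using power_mono[of "1/2" q 2] q by (simp add: power2_eq_square)
  have "1 / q\<^sup>2 - 1 = (1 - q) * (1 + q) / q\<^sup>2"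
    using q by (simp add: field_simps power2_eq_square)
  then have "\<bar>1 / q\<^sup>2 - 1\<bar> = \<bar>1 - q\<bar> * (1 + q) / q\<^sup>2"
    using q by (simp add: abs_mult)
  also have "\<dots> \<le> \<bar>1 - q\<bar> * (5/2) / (1/4)"
    using q \<open>1/4 \<le> q\<^sup>2\<close> by (intro frac_le mult_left_mono) auto
  also have "\<dots> \<le> 10 * t" using assms by (simp add: abs_minus_commute)
  finally show ?thesis .
qed

lemma normalized_weight_perturbation:
  fixes d s :: "'a \<Rightarrow> real"
  assumes "finite I" and d_nonneg: "\<And>l. l \<in> I \<Longrightarrow> 0 \<le> d l" and d_sum: "sum d I = 1"
    and s_near: "\<And>l. l \<in> I \<Longrightarrow> \<bar>s l - 1\<bar> \<le> \<eta>" and "\<eta> \<le> 1/2" and "m \<in> I"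
  shows "\<bar>d m * s m / (\<Sum>l\<in>I. d l * s l) - d m\<bar> \<le> 4 * \<eta>"
proof -
  define S where "S = (\<Sum>l\<in>I. d l * s l)"
  have "\<bar>S - 1\<bar> = \<bar>\<Sum>l\<in>I. d l * (s l - 1)\<bar>"
    unfolding S_def using d_sum by (simp add: algebra_simps sum_subtractf sum_distrib_left)
  also have "\<dots> \<le> (\<Sum>l\<in>I. d l * \<eta>)"
    using d_nonneg s_near
    by (intro order_trans[OF sum_abs] sum_mono) (simp add: abs_mult mult_left_mono)
  also have "\<dots> = \<eta>" using d_sum by (simp add: sum_distrib_right[symmetric])
  finally have S_near: "\<bar>S - 1\<bar> \<le> \<eta>" .
  have S_pos: "1/2 \<le> S" using S_near \<open>\<eta> \<le> 1/2\<close> by linarith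
  have dm: "0 \<le> d m" "d m \<le> 1"
    using d_nonneg \<open>m \<in> I\<close> member_le_sum[OF \<open>m \<in> I\<close> _ \<open>finite I\<close>, of d] d_sum by auto
  have "\<bar>s m - S\<bar> \<le> 2 * \<eta>" using s_near[OF \<open>m \<in> I\<close>] S_near by linarith
  have "d m * s m / S - d m = d m * (s m - S) / S"
    using S_pos by (simp add: field_simps)
  then have "\<bar>d m * s m / S - d m\<bar> = d m * \<bar>s m - S\<bar> / S"
    using S_pos dm by (simp add: abs_mult)
  also have "\<dots> \<le> 1 * (2 * \<eta>) / (1/2)"
    using dm S_pos \<open>\<bar>s m - S\<bar> \<le> 2 * \<eta>\<close> by (intro frac_le mult_mono) auto
  finally show ?thesis unfolding S_def by simp
qed

lemma dw_nonneg: "0 \<le> dw m"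
  by (simp add: dw_def)

lemma sum_dw: "(\<Sum>l\<in>{0..2}. dw l) = 1"
  by (simp add: dw_def numeral_2_eq_2)

lemma omegaDS_rescale:
  assumes "c \<noteq> 0"
  shows "omegaDS b del C m =
    dw m * (1 / (betaDS b del C m / c)\<^sup>2) / (\<Sum>l\<in>{0..2}. dw l * (1 / (betaDS b del C l / c)\<^sup>2))"
proof -
  have alpha: "alphaDS b del C l = dw l * (1 / (betaDS b del C l / c)\<^sup>2) / c\<^sup>2" for l
    using assms by (simp add: alphaDS_def power_divide)
  show ?thesis
    unfolding omegaDS_def alpha sum_divide_distrib[symmetric] using assms by simp
qed

lemma omegaDS_near_dw:
  fixes b del :: "nat \<Rightarrow> real"
  assumes "D \<noteq> 0" "0 < \<kappa>" "\<kappa> < P" "\<bar>P\<bar> \<le> B" "0 < dx" "dx < 1" "0 \<le> Mb" "0 \<le> Md"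
    and b_near: "\<And>l. l \<le> 2 \<Longrightarrow> \<bar>b l - D\<bar> \<le> Mb * dx\<^sup>2 * \<bar>D\<bar>"
    and del_near: "\<And>l. l \<le> 2 \<Longrightarrow> \<bar>del l + C - P\<bar> \<le> Md * dx"
    and small: "20 * ((Md + Mb * (B + Md)) / \<kappa>) * dx \<le> 1" and "m \<le> 2"
  shows "\<bar>omegaDS b del C m - dw m\<bar> \<le> 40 * ((Md + Mb * (B + Md)) / \<kappa>) * dx"
proof -
  define T where "T = (Md + Mb * (B + Md)) / \<kappa>"
  have "0 \<le> B" using \<open>\<bar>P\<bar> \<le> B\<close> by linarith
  have q_near: "\<bar>betaDS b del C l / (D * P) - 1\<bar> \<le> T * dx" if "l \<le> 2" for l
  proof -
    have "\<bar>del l + C\<bar> \<le> B + Md"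
      using del_near[OF that] \<open>\<bar>P\<bar> \<le> B\<close> mult_left_le[of dx Md] \<open>dx < 1\<close> \<open>0 < dx\<close> \<open>0 \<le> Md\<close>
      by linarith
    moreover have "Mb * dx\<^sup>2 \<le> Mb * dx"
      using \<open>0 < dx\<close> \<open>dx < 1\<close> \<open>0 \<le> Mb\<close> by (intro mult_left_mono) (auto simp: power2_eq_square)
    ultimately have "Mb * dx\<^sup>2 * \<bar>del l + C\<bar> \<le> Mb * dx * (B + Md)"
      using \<open>0 \<le> Mb\<close> \<open>0 < dx\<close> by (intro mult_mono[where a = "Mb * dx\<^sup>2"]) auto
    then have "(Md * dx + Mb * dx\<^sup>2 * \<bar>del l + C\<bar>) / P \<le> (Md * dx + Mb * dx * (B + Md)) / \<kappa>"
      using assms(2,3) \<open>0 \<le> Mb\<close> \<open>0 \<le> Md\<close> \<open>0 \<le> B\<close> \<open>0 < dx\<close> by (intro frac_le) auto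
    also have "\<dots> = T * dx" unfolding T_def by (simp add: field_simps)
    finally have "(Md * dx + Mb * dx\<^sup>2 * \<bar>del l + C\<bar>) / P \<le> T * dx" .
    with relative_error_mult[OF \<open>D \<noteq> 0\<close> _ b_near[OF that] del_near[OF that]] assms(2,3)
    show ?thesis unfolding betaDS_def by (simp add: algebra_simps)
  qed
  have "0 \<le> T" unfolding T_def using assms(2,7,8) \<open>0 \<le> B\<close> by simp
  then have "T * dx \<le> 1/2" "10 * (T * dx) \<le> 1/2"
    using small[folded T_def] \<open>0 < dx\<close> by (simp_all add: algebra_simps)
  have "D * P \<noteq> 0" using \<open>D \<noteq> 0\<close> assms(2,3) by simp
  have "\<bar>omegaDS b del C m - dw m\<bar> \<le> 4 * (10 * (T * dx))"
    unfolding omegaDS_rescale[OF \<open>D * P \<noteq> 0\<close>]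
    using \<open>m \<le> 2\<close> \<open>10 * (T * dx) \<le> 1/2\<close> inverse_square_near_one[OF q_near \<open>T * dx \<le> 1/2\<close>]
    by (intro normalized_weight_perturbation) (auto simp: dw_nonneg sum_dw)
  also have "\<dots> = 40 * T * dx" by simp
  finally show ?thesis unfolding T_def .
qed

theorem mainTheorem2:
  fixes fx :: "real \<Rightarrow> real" and x0 C \<kappa> :: real and k :: nat
    and \<Phi> :: "real list \<Rightarrow> real"
    and \<delta> :: "real \<Rightarrow> int \<Rightarrow> nat \<Rightarrow> real"
    and D :: "real \<Rightarrow> int \<Rightarrow> real"
  assumes smooth: "\<forall>n x. ((deriv ^^ n) fx) differentiable (at x)"
    and D_nz: "\<forall>dx i. 0 < dx \<longrightarrow> D dx i \<noteq> 0"
    and beta_asym: "\<exists>M h1. 0 < h1 \<and> (\<forall>dx i m. 0 < dx \<and> dx < h1 \<and> m \<le> 2 \<longrightarrow>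
            \<bar>betaJS fx x0 dx i m - D dx i\<bar> \<le> M * dx^2 * \<bar>D dx i\<bar>)"
    and delta1: "\<forall>dx i. \<delta> dx i 1 = \<Phi> (stencil x0 dx k i)"
    and delta02: "\<exists>M h1. 0 < h1 \<and> (\<forall>dx i. 0 < dx \<and> dx < h1 \<longrightarrow>
            \<bar>\<delta> dx i 0 - \<Phi> (stencil x0 dx k i)\<bar> \<le> M * dx \<and>
            \<bar>\<delta> dx i 2 - \<Phi> (stencil x0 dx k i)\<bar> \<le> M * dx)"
    and kappa_pos: "0 < \<kappa>"
    and P_lower: "\<forall>dx i. 0 < dx \<longrightarrow> \<Phi> (stencil x0 dx k i) + C > \<kappa>"
    and P_bounded: "\<exists>B. \<forall>dx i. 0 < dx \<longrightarrow> \<bar>\<Phi> (stencil x0 dx k i) + C\<bar> \<le> B"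
  shows "\<exists>K h0. 0 < h0 \<and> (\<forall>dx i m. 0 < dx \<and> dx < h0 \<and> m \<le> 2 \<longrightarrow>
            \<bar>omegaDS (betaJS fx x0 dx i) (\<delta> dx i) C m - dw m\<bar> \<le> K * dx \<and>
            \<bar>omegaDS (betaJS fx x0 dx (i - 1)) (\<delta> dx i) C m - dw m\<bar> \<le> K * dx)"
proof -
  obtain M1 h1 where "0 < h1" and beta_near: "\<And>dx i m. 0 < dx \<Longrightarrow> dx < h1 \<Longrightarrow> m \<le> 2 \<Longrightarrow>
      \<bar>betaJS fx x0 dx i m - D dx i\<bar> \<le> M1 * dx\<^sup>2 * \<bar>D dx i\<bar>"
    using beta_asym by blast
  obtain M2 h2 where "0 < h2" and delta_near: "\<And>dx i. 0 < dx \<Longrightarrow> dx < h2 \<Longrightarrow>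
      \<bar>\<delta> dx i 0 - \<Phi> (stencil x0 dx k i)\<bar> \<le> M2 * dx \<and> \<bar>\<delta> dx i 2 - \<Phi> (stencil x0 dx k i)\<bar> \<le> M2 * dx"
    using delta02 by blast
  obtain B where P_le: "\<And>dx i. 0 < dx \<Longrightarrow> \<bar>\<Phi> (stencil x0 dx k i) + C\<bar> \<le> B"
    using P_bounded by blast
  define T where "T = (\<bar>M2\<bar> + \<bar>M1\<bar> * (\<bar>B\<bar> + \<bar>M2\<bar>)) / \<kappa>"
  have "0 \<le> T" unfolding T_def using kappa_pos by simp
  define h0 where "h0 = min (min 1 (min h1 h2)) (1 / (20 * T + 1))"
  have "0 < h0" unfolding h0_def using \<open>0 < h1\<close> \<open>0 < h2\<close> \<open>0 \<le> T\<close> by simp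
  have near: "\<bar>omegaDS (betaJS fx x0 dx j) (\<delta> dx i) C m - dw m\<bar> \<le> 40 * T * dx"
    if "0 < dx" "dx < h0" "m \<le> 2" for dx i j m
  proof (rule omegaDS_near_dw[where P = "\<Phi> (stencil x0 dx k i) + C" and \<kappa> = \<kappa>
        and Mb = "\<bar>M1\<bar>" and Md = "\<bar>M2\<bar>" and B = "\<bar>B\<bar>", folded T_def])
    have "dx < 1" "dx < h1" "dx < h2" "dx < 1 / (20 * T + 1)"
      using \<open>dx < h0\<close> unfolding h0_def by auto
    then show "dx < 1" and "20 * T * dx \<le> 1"
      using \<open>0 \<le> T\<close> \<open>0 < dx\<close> by (simp_all add: field_simps)
    show "\<bar>betaJS fx x0 dx j l - D dx j\<bar> \<le> \<bar>M1\<bar> * dx\<^sup>2 * \<bar>D dx j\<bar>" if "l \<le> 2" for l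
      using beta_near[OF \<open>0 < dx\<close> \<open>dx < h1\<close> that, of j]
      by (rule order_trans) (simp add: mult_right_mono)
    show "\<bar>\<delta> dx i l + C - (\<Phi> (stencil x0 dx k i) + C)\<bar> \<le> \<bar>M2\<bar> * dx" if "l \<le> 2" for l
    proof -
      have "l = 0 \<or> l = 1 \<or> l = 2" using that by linarith
      moreover have "M2 * dx \<le> \<bar>M2\<bar> * dx" "0 \<le> \<bar>M2\<bar> * dx"
        using \<open>0 < dx\<close> by (simp_all add: mult_right_mono)
      ultimately show ?thesis
        using delta_near[OF \<open>0 < dx\<close> \<open>dx < h2\<close>, of i] delta1 by auto
    qed
    show "\<bar>\<Phi> (stencil x0 dx k i) + C\<bar> \<le> \<bar>B\<bar>"
      using P_le[OF \<open>0 < dx\<close>, of i] by linarith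
  qed (use that D_nz kappa_pos P_lower in auto)
  show ?thesis
    using \<open>0 < h0\<close> near by blast
qed

end
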